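(* Let $G=(V,E)$ be a simple graph with $|V|=n$, adjacency matrix $A$, and $D$ the diagonal matrix of vertex degrees. Then $$\alpha(G)=\max\{\mathbf{e}^\top x \mid x\in\{0,1\}^n,\ 0\leq (A+I)x-\mathbf{e}\leq (D-I)(\mathbf{e}-x)\},$$ where $I$ is the $n\times n$ identity and $\mathbf{e}$ the all-ones vector.
   Context: $\alpha(G)$ is the maximum cardinality of an independent set of $G$. Vector inequalities are componentwise. *)

theory Defs
  imports "HOL-Analysis.Analysis"
begin

definition simple_graph :: "('n \<Rightarrow> 'n \<Rightarrow> bool) \<Rightarrow> bool" where
  "simple_graph E \<longleftrightarrow> (\<forall>u v. E u v \<longrightarrow> E v u) \<and> (\<forall>v. \<not> E v v)"

definition independent_set :: "('n \<Rightarrow> 'n \<Rightarrow> bool) \<Rightarrow> 'n set \<Rightarrow> bool" where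
  "independent_set E S \<longleftrightarrow> (\<forall>u\<in>S. \<forall>v\<in>S. \<not> E u v)"

definition alpha :: "('n::finite \<Rightarrow> 'n \<Rightarrow> bool) \<Rightarrow> nat" where
  "alpha E = Max {card S | S. independent_set E S}"

definition adj_matrix :: "('n::finite \<Rightarrow> 'n \<Rightarrow> bool) \<Rightarrow> real^'n^'n" where
  "adj_matrix E = (\<chi> i j. if E i j then 1 else 0)"

definition degree :: "('n::finite \<Rightarrow> 'n \<Rightarrow> bool) \<Rightarrow> 'n \<Rightarrow> nat" where
  "degree E v = card {u. E v u}"

definition degree_matrix :: "('n::finite \<Rightarrow> 'n \<Rightarrow> bool) \<Rightarrow> real^'n^'n" where
  "degree_matrix E = (\<chi> i j. if i = j then real (degree E i) else 0)"

end

theory Submission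
  imports Defs
begin

text \<open>
  The 0/1 vectors satisfying the constraints are exactly the indicator vectors of the
  maximal (that is, dominating) independent sets: at a vertex of the set the upper bound
  forces all neighbours out of the set, at a vertex outside it the lower bound asks for a
  neighbour in the set while the upper bound holds trivially because the neighbour sum is
  at most the degree. A maximum independent set is maximal, so the largest objective
  value is the independence number.
\<close>

definition dominating_set :: "('n \<Rightarrow> 'n \<Rightarrow> bool) \<Rightarrow> 'n set \<Rightarrow> bool" where
  "dominating_set E S \<longleftrightarrow> (\<forall>i. i \<notin> S \<longrightarrow> (\<exists>j\<in>S. E i j))"

definition indicator_vec :: "'n set \<Rightarrow> real^'n::finite" where
  "indicator_vec S = (\<chi> i. if i \<in> S then 1 else 0)"

definition alpha_program_feasible :: "('n::finite \<Rightarrow> 'n \<Rightarrow> bool) \<Rightarrow> real^'n \<Rightarrow> bool" where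
  "alpha_program_feasible E x \<longleftrightarrow>
     (\<forall>i. x $ i \<in> {0, 1}) \<and>
     0 \<le> (adj_matrix E + mat 1) *v x - 1 \<and>
     (adj_matrix E + mat 1) *v x - 1 \<le> (degree_matrix E - mat 1) *v (1 - x)"

lemma adj_matrix_plus_id_mult_nth:
  "((adj_matrix E + mat 1) *v x) $ i = x $ i + (\<Sum>j\<in>{j. E i j}. x $ j)"
proof -
  have "((adj_matrix E + mat 1) *v x) $ i =
        (\<Sum>j\<in>UNIV. if E i j then x $ j else 0) + (\<Sum>j\<in>UNIV. if i = j then x $ j else 0)"
    unfolding matrix_vector_mult_def sum.distrib[symmetric] vec_lambda_beta
    by (rule sum.cong) (auto simp: adj_matrix_def mat_def)
  then show ?thesis
    by (simp add: sum.If_cases)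
qed

lemma degree_matrix_minus_id_mult_nth:
  "((degree_matrix E - mat 1) *v y) $ i = (real (degree E i) - 1) * y $ i"
proof -
  have "((degree_matrix E - mat 1) *v y) $ i =
        (\<Sum>j\<in>UNIV. if i = j then (real (degree E i) - 1) * y $ j else 0)"
    unfolding matrix_vector_mult_def vec_lambda_beta
    by (rule sum.cong) (auto simp: degree_matrix_def mat_def)
  then show ?thesis
    by simp
qed

lemma indicator_vec_nth [simp]: "indicator_vec S $ i = (if i \<in> S then 1 else 0)"
  by (simp add: indicator_vec_def)

lemma inner_one_indicator_vec: "(1::real^'n::finite) \<bullet> indicator_vec S = real (card S)"
  by (simp add: inner_vec_def sum.If_cases)

lemma zero_one_vec_eq_indicator_vec:
  assumes "\<forall>i. x $ i \<in> {0, 1::real}"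
  shows "x = indicator_vec {i. x $ i = 1}"
  using assms by (auto simp: vec_eq_iff)

lemma adj_matrix_plus_id_mult_indicator_vec_nth:
  "((adj_matrix E + mat 1) *v indicator_vec S) $ i =
     (if i \<in> S then 1 else 0) + real (card {j\<in>S. E i j})"
proof -
  have "{j. E i j} \<inter> {j. j \<in> S} = {j\<in>S. E i j}"
    by auto
  then show ?thesis
    by (simp add: adj_matrix_plus_id_mult_nth sum.If_cases)
qed

lemma alpha_program_feasible_indicator_vec_iff:
  fixes E :: "'n::finite \<Rightarrow> 'n \<Rightarrow> bool"
  shows "alpha_program_feasible E (indicator_vec S) \<longleftrightarrow>
         independent_set E S \<and> dominating_set E S"
proof -
  have vertex_iff:
    "0 \<le> ((adj_matrix E + mat 1) *v indicator_vec S) $ i - 1 \<and>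
     ((adj_matrix E + mat 1) *v indicator_vec S) $ i - 1 \<le>
       ((degree_matrix E - mat 1) *v (1 - indicator_vec S)) $ i \<longleftrightarrow>
     (i \<in> S \<longrightarrow> {j\<in>S. E i j} = {}) \<and> (i \<notin> S \<longrightarrow> {j\<in>S. E i j} \<noteq> {})" for i
  proof -
    have "card {j\<in>S. E i j} \<le> degree E i"
      unfolding degree_def by (intro card_mono) auto
    then show ?thesis
      by (cases "i \<in> S") (auto simp: adj_matrix_plus_id_mult_indicator_vec_nth
          degree_matrix_minus_id_mult_nth Suc_le_eq card_gt_0_iff)
  qed
  have "alpha_program_feasible E (indicator_vec S) \<longleftrightarrow>
        (\<forall>i. 0 \<le> ((adj_matrix E + mat 1) *v indicator_vec S) $ i - 1 \<and>
             ((adj_matrix E + mat 1) *v indicator_vec S) $ i - 1 \<le>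
               ((degree_matrix E - mat 1) *v (1 - indicator_vec S)) $ i)"
    by (simp add: alpha_program_feasible_def less_eq_vec_def all_conj_distrib)
  also have "\<dots> \<longleftrightarrow>
        (\<forall>i. (i \<in> S \<longrightarrow> {j\<in>S. E i j} = {}) \<and> (i \<notin> S \<longrightarrow> {j\<in>S. E i j} \<noteq> {}))"
    by (simp only: vertex_iff)
  also have "\<dots> \<longleftrightarrow> independent_set E S \<and> dominating_set E S"
    by (auto simp: independent_set_def dominating_set_def)
  finally show ?thesis .
qed

lemma alpha_program_values:
  fixes E :: "'n::finite \<Rightarrow> 'n \<Rightarrow> bool"
  shows "{(1::real^'n) \<bullet> x | x. alpha_program_feasible E x} =
         (\<lambda>S. real (card S)) ` {S. independent_set E S \<and> dominating_set E S}"
proof (intro equalityI subsetI)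
  fix v assume "v \<in> {(1::real^'n) \<bullet> x | x. alpha_program_feasible E x}"
  then obtain x where "v = 1 \<bullet> x" and x: "alpha_program_feasible E x"
    by blast
  moreover have "x = indicator_vec {i. x $ i = 1}"
    using x by (intro zero_one_vec_eq_indicator_vec) (simp add: alpha_program_feasible_def)
  ultimately show "v \<in> (\<lambda>S. real (card S)) ` {S. independent_set E S \<and> dominating_set E S}"
    by (metis (mono_tags) alpha_program_feasible_indicator_vec_iff inner_one_indicator_vec
        image_eqI mem_Collect_eq)
next
  fix v assume "v \<in> (\<lambda>S. real (card S)) ` {S. independent_set E S \<and> dominating_set E S}"
  then obtain S where "v = real (card S)" and "independent_set E S \<and> dominating_set E S"
    by blast
  then show "v \<in> {(1::real^'n) \<bullet> x | x. alpha_program_feasible E x}"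
    by (auto simp: alpha_program_feasible_indicator_vec_iff inner_one_indicator_vec
        intro!: exI[of _ "indicator_vec S"])
qed

lemma finite_card_independent_sets:
  fixes E :: "'n::finite \<Rightarrow> 'n \<Rightarrow> bool"
  shows "finite {card S | S. independent_set E S}"
  by (rule finite_subset[of _ "card ` UNIV"]) auto

lemma card_le_alpha:
  fixes E :: "'n::finite \<Rightarrow> 'n \<Rightarrow> bool"
  assumes "independent_set E S"
  shows "card S \<le> alpha E"
  unfolding alpha_def using assms finite_card_independent_sets by (auto intro: Max_ge)

lemma alpha_attained:
  fixes E :: "'n::finite \<Rightarrow> 'n \<Rightarrow> bool"
  obtains S where "independent_set E S" and "card S = alpha E"
proof -
  have "independent_set E {}"
    by (simp add: independent_set_def)
  then have "alpha E \<in> {card S | S. independent_set E S}"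
    unfolding alpha_def using finite_card_independent_sets by (intro Max_in) auto
  then show ?thesis
    using that by auto
qed

lemma maximum_independent_set_dominating:
  fixes E :: "'n::finite \<Rightarrow> 'n \<Rightarrow> bool"
  assumes "simple_graph E" and S: "independent_set E S" "card S = alpha E"
  shows "dominating_set E S"
  unfolding dominating_set_def
proof (intro allI impI, rule ccontr)
  fix i assume "i \<notin> S" and undominated: "\<not> (\<exists>j\<in>S. E i j)"
  have "independent_set E (insert i S)"
    using assms undominated unfolding independent_set_def simple_graph_def by blast
  then have "card (insert i S) \<le> alpha E"
    by (rule card_le_alpha)
  with \<open>i \<notin> S\<close> S(2) show False
    by simp
qed

lemma alpha_eq_Max_maximal_independent_sets:
  fixes E :: "'n::finite \<Rightarrow> 'n \<Rightarrow> bool"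
  assumes "simple_graph E"
  shows "real (alpha E) =
         Max ((\<lambda>S. real (card S)) ` {S. independent_set E S \<and> dominating_set E S})"
proof (rule sym, rule Max_eqI)
  obtain S where "independent_set E S" and "card S = alpha E"
    by (rule alpha_attained)
  with assms show "real (alpha E) \<in> (\<lambda>S. real (card S)) ` {S. independent_set E S \<and> dominating_set E S}"
    by (intro image_eqI[of _ _ S]) (auto intro: maximum_independent_set_dominating)
qed (auto intro: card_le_alpha)

theorem theorem4:
  fixes E :: "'n::finite \<Rightarrow> 'n \<Rightarrow> bool"
  assumes "simple_graph E"
  shows "real (alpha E) =
    Max {(1::real^'n) \<bullet> x | x.
           (\<forall>i. x $ i \<in> {0, 1}) \<and>
           0 \<le> (adj_matrix E + mat 1) *v x - 1 \<and>
           (adj_matrix E + mat 1) *v x - 1 \<le> (degree_matrix E - mat 1) *v (1 - x)}"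
  using alpha_eq_Max_maximal_independent_sets[OF assms] alpha_program_values[of E]
  by (simp add: alpha_program_feasible_def)

end
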